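(* Let $S$ be a numerical semigroup of depth $q\ge 1$, with $\rho=qm-c$. For all $x,y\in S$, $$\delta(x+y)+q+1\ \ge\ \delta(x)+\delta(y)\ \ge\ \delta(x+y)+q-\min(\rho,1).$$
   Context: A numerical semigroup is a subset $S\subseteq\mathbb N$ containing $0$, closed under addition, with finite complement. Its multiplicity is $m=\min(S\setminus\{0\})$, its conductor is $c=\max(\mathbb Z\setminus S)+1$, its depth is $q=\lceil c/m\rceil$, and $\rho=qm-c\in[0,m)$. For $x\in S$, the depth $\delta(x)$ is the unique integer such that $x+\delta(x)m\in[c,c+m-1]$. *)

theory Defs
  imports Complex_Main
begin

definition numerical_semigroup :: "nat set \<Rightarrow> bool" where
  "numerical_semigroup S \<longleftrightarrow> 0 \<in> S \<and> (\<forall>a\<in>S. \<forall>b\<in>S. a + b \<in> S) \<and> finite (UNIV - S)"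

definition multiplicity :: "nat set \<Rightarrow> int" where
  "multiplicity S = int (Min (S - {0}))"

definition conductor :: "nat set \<Rightarrow> int" where
  "conductor S = (GREATEST z::int. z \<notin> int ` S) + 1"

definition depth :: "nat set \<Rightarrow> int" where
  "depth S = \<lceil>real_of_int (conductor S) / real_of_int (multiplicity S)\<rceil>"

definition rho :: "nat set \<Rightarrow> int" where
  "rho S = depth S * multiplicity S - conductor S"

definition elem_depth :: "nat set \<Rightarrow> nat \<Rightarrow> int" where
  "elem_depth S x = (THE d::int. conductor S \<le> int x + d * multiplicity S \<and>
       int x + d * multiplicity S \<le> conductor S + multiplicity S - 1)"

end

theory Submission
  imports Defs
begin

text \<open>Shift \<open>x\<close>, \<open>y\<close> and \<open>x + y\<close> by their depths into the window \<open>[c, c + m)\<close>, obtaining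
  \<open>X\<close>, \<open>Y\<close>, \<open>Z\<close>. Then \<open>(\<delta>(x) + \<delta>(y) - \<delta>(x + y) - q) m = X + Y - Z - q m\<close>, and since
  \<open>q m = c + \<rho>\<close> also lies in the window, this multiple of \<open>m\<close> lies strictly between
  \<open>-2m\<close> and \<open>2m\<close>, and strictly above \<open>-m\<close> when \<open>\<rho> = 0\<close>.\<close>

lemma ex1_shift_into_window:
  fixes a c m :: int
  assumes "m > 0"
  shows "\<exists>!d. c \<le> a + d * m \<and> a + d * m \<le> c + m - 1"
proof
  define d where "d = (c + m - 1 - a) div m"
  have "c + m - 1 - a = d * m + (c + m - 1 - a) mod m"
    unfolding d_def by simp
  moreover have "0 \<le> (c + m - 1 - a) mod m" "(c + m - 1 - a) mod m < m"
    using assms by simp_all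
  ultimately show "c \<le> a + d * m \<and> a + d * m \<le> c + m - 1"
    by linarith
  fix e
  assume e: "c \<le> a + e * m \<and> a + e * m \<le> c + m - 1"
  have "(e - d) * m < 1 * m" "(d - e) * m < 1 * m"
    using e \<open>c \<le> a + d * m \<and> a + d * m \<le> c + m - 1\<close> by (simp_all add: algebra_simps)
  then show "e = d"
    using assms mult_less_cancel_right_pos by fastforce
qed

lemma elem_depth_bounds:
  assumes "multiplicity S > 0"
  shows "conductor S \<le> int x + elem_depth S x * multiplicity S"
    and "int x + elem_depth S x * multiplicity S < conductor S + multiplicity S"
  using theI'[OF ex1_shift_into_window[OF assms, of "conductor S" "int x"]]
  unfolding elem_depth_def by simp_all

lemma ceiling_divide_times_bounds:
  fixes c m :: int
  assumes "m > 0"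
  shows "c \<le> \<lceil>of_int c / of_int m :: real\<rceil> * m"
    and "\<lceil>of_int c / of_int m :: real\<rceil> * m < c + m"
proof -
  have "real_of_int c \<le> of_int \<lceil>of_int c / of_int m :: real\<rceil> * of_int m"
    using ceiling_divide_upper[of "real_of_int m" "of_int c"] assms by simp
  then show "c \<le> \<lceil>of_int c / of_int m :: real\<rceil> * m"
    by (simp only: of_int_mult [symmetric] of_int_le_iff)
  have "(of_int \<lceil>of_int c / of_int m :: real\<rceil> - 1) * real_of_int m < of_int c"
    using ceiling_divide_lower[of "real_of_int m" "of_int c"] assms by simp
  then have "real_of_int ((\<lceil>of_int c / of_int m :: real\<rceil> - 1) * m) < of_int c"
    by simp
  then show "\<lceil>of_int c / of_int m :: real\<rceil> * m < c + m"
    by (simp only: of_int_less_iff) (simp add: algebra_simps)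
qed

text \<open>\<open>S - {0}\<close> is infinite for a numerical semigroup, so \<^const>\<open>multiplicity\<close> is the
  unspecified \<open>Min\<close> of an infinite set; positivity has to come from the depth instead.\<close>

lemma multiplicity_pos_if_depth_pos:
  assumes "depth S > 0"
  shows "multiplicity S > 0"
proof (rule ccontr)
  assume "\<not> multiplicity S > 0"
  then have "multiplicity S = 0"
    unfolding multiplicity_def by simp
  then show False
    using assms unfolding depth_def by simp
qed

lemma depth_times_multiplicity_bounds:
  assumes "multiplicity S > 0"
  shows "conductor S \<le> depth S * multiplicity S"
    and "depth S * multiplicity S < conductor S + multiplicity S"
  using ceiling_divide_times_bounds[OF assms] unfolding depth_def by simp_all

lemma window_shift_sum_bounds:
  fixes a b c m q dx dy dz :: int
  assumes "m > 0" and "c \<le> q * m" and "q * m < c + m"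
    and "c \<le> a + dx * m" and "a + dx * m < c + m"
    and "c \<le> b + dy * m" and "b + dy * m < c + m"
    and "c \<le> a + b + dz * m" and "a + b + dz * m < c + m"
  shows "dx + dy \<le> dz + q + 1"
    and "dz + q - min (q * m - c) 1 \<le> dx + dy"
proof -
  define k where "k = dx + dy - dz - q"
  have km: "k * m = (a + dx * m) + (b + dy * m) - (a + b + dz * m) - q * m"
    unfolding k_def by (simp add: algebra_simps)
  have "k * m < 2 * m"
    using km assms by linarith
  then have "k < 2"
    using assms(1) mult_less_cancel_right_pos by blast
  then show "dx + dy \<le> dz + q + 1"
    unfolding k_def by linarith
  show "dz + q - min (q * m - c) 1 \<le> dx + dy"
  proof (cases "q * m = c")
    case True
    then have "(- 1) * m < k * m"
      using km assms by linarith
    then have "- 1 < k"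
      using assms(1) mult_less_cancel_right_pos by blast
    then show ?thesis
      using True unfolding k_def by simp
  next
    case False
    have "(- 2) * m < k * m"
      using km assms by linarith
    then have "- 2 < k"
      using assms(1) mult_less_cancel_right_pos by blast
    then show ?thesis
      using False assms(2) unfolding k_def by simp
  qed
qed

theorem proposition2p5:
  fixes S :: "nat set" and x y :: nat
  assumes "numerical_semigroup S"
    and "depth S \<ge> 1"
    and "x \<in> S" and "y \<in> S"
  shows "elem_depth S (x + y) + depth S + 1 \<ge> elem_depth S x + elem_depth S y
       \<and> elem_depth S x + elem_depth S y \<ge> elem_depth S (x + y) + depth S - min (rho S) 1"
proof -
  have m: "multiplicity S > 0"
    using multiplicity_pos_if_depth_pos assms(2) by simp
  show ?thesis
    using window_shift_sum_bounds[OF m depth_times_multiplicity_bounds[OF m]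
        elem_depth_bounds[OF m, of x] elem_depth_bounds[OF m, of y]
        elem_depth_bounds[OF m, of "x + y", unfolded of_nat_add]]
    unfolding rho_def by simp
qed

end
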